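(* Let $R$ be an associative ring with identity and $a,b\in R$. If $ab\in R^{\dagger}$, then $ba\in R^{\dagger}$ and $(ba)^{\dagger}=b\big((ab)^{\dagger}\big)^2a$.
   Context: For $x\in R$, $\mathrm{comm}(x)=\{y\in R : xy=yx\}$ and $\mathrm{comm}^2(x)=\{y\in R : yz=zy \text{ for all } z\in\mathrm{comm}(x)\}$. $R^{rad}$ is the Jacobson radical of $R$. An element $x$ has a p-Drazin (pseudo Drazin) inverse if there is $y\in R$ with $y=yxy$, $y\in\mathrm{comm}^2(x)$ and $x^k-x^{k+1}y\in R^{rad}$ for some $k\in\mathbb{N}$; such $y$ is unique and denoted $x^{\dagger}$; $R^{\dagger}$ is the set of such $x$. *)

theory Defs
  imports Main
begin

definition left_ideal :: "'a::ring_1 set \<Rightarrow> bool" where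
  "left_ideal I \<longleftrightarrow> 0 \<in> I \<and> (\<forall>x\<in>I. \<forall>y\<in>I. x + y \<in> I) \<and>
     (\<forall>x\<in>I. - x \<in> I) \<and> (\<forall>r. \<forall>x\<in>I. r * x \<in> I)"

definition maximal_left_ideal :: "'a::ring_1 set \<Rightarrow> bool" where
  "maximal_left_ideal I \<longleftrightarrow> left_ideal I \<and> I \<noteq> UNIV \<and>
     (\<forall>J. left_ideal J \<and> I \<subseteq> J \<longrightarrow> J = I \<or> J = UNIV)"

definition jacobson_radical :: "'a::ring_1 set" where
  "jacobson_radical = \<Inter> {I. maximal_left_ideal I}"

definition comm :: "'a::ring_1 \<Rightarrow> 'a set" where
  "comm x = {y. x * y = y * x}"

definition comm2 :: "'a::ring_1 \<Rightarrow> 'a set" where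
  "comm2 x = {y. \<forall>z\<in>comm x. y * z = z * y}"

definition is_pdrazin_inv :: "'a::ring_1 \<Rightarrow> 'a \<Rightarrow> bool" where
  "is_pdrazin_inv x y \<longleftrightarrow> y = y * x * y \<and> y \<in> comm2 x \<and>
     (\<exists>k::nat. x ^ k - x ^ (k + 1) * y \<in> jacobson_radical)"

definition pdrazin_set :: "'a::ring_1 set" where
  "pdrazin_set = {x. \<exists>y. is_pdrazin_inv x y}"

definition pdrazin :: "'a::ring_1 \<Rightarrow> 'a" where
  "pdrazin x = (THE y. is_pdrazin_inv x y)"

end

theory Submission
  imports Defs
begin

text \<open>If \<open>y\<close> is the pseudo Drazin inverse of \<open>ab\<close>, then \<open>z = b y\<^sup>2 a\<close> works for \<open>ba\<close>.
The identities \<open>z (ba) z = z\<close> and \<open>(ba)^(k+1) - (ba)^(k+2) z = b ((ab)^k - (ab)^(k+1) y) a\<close> are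
direct computations, the latter landing in the radical because the Jacobson radical is a two-sided
ideal. For the double commutant, an element \<open>c\<close> commuting with \<open>ba\<close> makes \<open>acb\<close> commute with
\<open>ab\<close>, hence with \<open>y\<close>. Uniqueness of pseudo Drazin inverses, which identifies \<open>z\<close> with the
pseudo Drazin inverse of \<open>ba\<close>, rests on the radical containing no nonzero idempotent.\<close>

lemma left_idealD:
  assumes "left_ideal I"
  shows "0 \<in> I" "x \<in> I \<Longrightarrow> y \<in> I \<Longrightarrow> x + y \<in> I" "x \<in> I \<Longrightarrow> - x \<in> I"
    "x \<in> I \<Longrightarrow> r * x \<in> I"
  using assms unfolding left_ideal_def by auto

lemma left_ideal_eq_UNIV_iff: "left_ideal I \<Longrightarrow> I = UNIV \<longleftrightarrow> 1 \<in> I"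
  using left_idealD(4)[of I 1] by (metis UNIV_I UNIV_eq_I mult.right_neutral)

lemma left_ideal_add_principal:
  assumes "left_ideal M"
  shows "left_ideal {m + r * w | m r. m \<in> M}"
  unfolding left_ideal_def
proof (intro conjI ballI allI)
  show "0 \<in> {m + r * w | m r. m \<in> M}"
  proof -
    have "0 = 0 + 0 * w \<and> 0 \<in> M" using left_idealD(1)[OF assms] by simp
    then show ?thesis by blast
  qed
  fix x y assume "x \<in> {m + r * w | m r. m \<in> M}" "y \<in> {m + r * w | m r. m \<in> M}"
  then obtain m r m' r' where "x = m + r * w" "y = m' + r' * w" "m \<in> M" "m' \<in> M"
    by blast
  then show "x + y \<in> {m + r * w | m r. m \<in> M}" "- x \<in> {m + r * w | m r. m \<in> M}"
    "s * x \<in> {m + r * w | m r. m \<in> M}" for s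
  proof -
    have "x + y = (m + m') + (r + r') * w" "- x = - m + (- r) * w" "s * x = s * m + (s * r) * w"
      using \<open>x = m + r * w\<close> \<open>y = m' + r' * w\<close> by (simp_all add: algebra_simps)
    moreover have "m + m' \<in> M" "- m \<in> M" "s * m \<in> M"
      using \<open>m \<in> M\<close> \<open>m' \<in> M\<close> left_idealD[OF assms] by simp_all
    ultimately show "x + y \<in> {m + r * w | m r. m \<in> M}" "- x \<in> {m + r * w | m r. m \<in> M}"
      "s * x \<in> {m + r * w | m r. m \<in> M}" by blast+
  qed
qed

lemma left_ideal_Union_chain:
  assumes "C \<noteq> {}" "\<And>I. I \<in> C \<Longrightarrow> left_ideal I" "subset.chain UNIV C"
  shows "left_ideal (\<Union>C)"
  unfolding left_ideal_def
proof (intro conjI ballI allI)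
  show "0 \<in> \<Union>C" using assms(1,2) left_idealD(1) by blast
  fix x y assume "x \<in> \<Union>C" "y \<in> \<Union>C"
  then obtain I I' where "I \<in> C" "I' \<in> C" "x \<in> I" "y \<in> I'" by blast
  moreover have "I \<subseteq> I' \<or> I' \<subseteq> I"
    using assms(3) \<open>I \<in> C\<close> \<open>I' \<in> C\<close> unfolding subset_chain_def by blast
  ultimately show "x + y \<in> \<Union>C" using assms(2) left_idealD(2) by blast
  show "- x \<in> \<Union>C" "r * x \<in> \<Union>C" for r
    using \<open>I \<in> C\<close> \<open>x \<in> I\<close> assms(2) left_idealD(3,4) by blast+
qed

lemma maximal_left_ideal_exists:
  assumes "left_ideal L" "1 \<notin> L"
  obtains M where "maximal_left_ideal M" "L \<subseteq> M"
proof -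
  let ?A = "{I. left_ideal I \<and> L \<subseteq> I \<and> 1 \<notin> I}"
  have "\<exists>M\<in>?A. \<forall>I\<in>?A. M \<subseteq> I \<longrightarrow> I = M"
  proof (rule subset_Zorn_nonempty)
    show "?A \<noteq> {}" using assms by blast
    fix C assume "C \<noteq> {}" "subset.chain ?A C"
    then show "\<Union>C \<in> ?A"
      using left_ideal_Union_chain[of C] unfolding subset_chain_def by blast
  qed
  then obtain M where "M \<in> ?A" and max: "\<forall>I\<in>?A. M \<subseteq> I \<longrightarrow> I = M" by blast
  have "maximal_left_ideal M"
    unfolding maximal_left_ideal_def
    using \<open>M \<in> ?A\<close> max left_ideal_eq_UNIV_iff by blast
  with \<open>M \<in> ?A\<close> show thesis using that by blast
qed

lemma jacobson_radical_iff:
  "x \<in> jacobson_radical \<longleftrightarrow> (\<forall>M. maximal_left_ideal M \<longrightarrow> x \<in> M)"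
  unfolding jacobson_radical_def by blast

lemma left_ideal_jacobson_radical: "left_ideal (jacobson_radical :: 'a::ring_1 set)"
proof -
  have "left_ideal M" if "maximal_left_ideal M" for M :: "'a set"
    using that unfolding maximal_left_ideal_def by simp
  then show ?thesis
    unfolding left_ideal_def by (auto simp: jacobson_radical_iff left_idealD)
qed

lemma maximal_left_ideal_quotient:
  assumes M: "maximal_left_ideal M" and "s \<notin> M"
  shows "maximal_left_ideal {t. t * s \<in> M}"
proof -
  let ?K = "{t. t * s \<in> M}"
  have "left_ideal M" "M \<noteq> UNIV" and M_max: "\<And>J. left_ideal J \<Longrightarrow> M \<subseteq> J \<Longrightarrow> J = M \<or> J = UNIV"
    using M unfolding maximal_left_ideal_def by auto
  have "left_ideal ?K"
    using left_idealD[OF \<open>left_ideal M\<close>] unfolding left_ideal_def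
    by (simp add: distrib_right mult.assoc)
  moreover have "1 \<notin> ?K" using \<open>s \<notin> M\<close> by simp
  then have "?K \<noteq> UNIV" by blast
  moreover have "J = ?K \<or> J = UNIV" if J: "left_ideal J" "?K \<subseteq> J" for J
  proof (cases "J \<subseteq> ?K")
    case False
    then obtain t where "t \<in> J" "t * s \<notin> M" by blast
    let ?N = "{m + r * (t * s) | m r. m \<in> M}"
    have "m \<in> ?N" if "m \<in> M" for m
    proof -
      have "m = m + 0 * (t * s)" by simp
      with that show ?thesis by blast
    qed
    moreover have "t * s \<in> ?N"
    proof -
      have "t * s = 0 + 1 * (t * s)" by simp
      with left_idealD(1)[OF \<open>left_ideal M\<close>] show ?thesis by blast
    qed
    ultimately have "?N = UNIV"
      using M_max[OF left_ideal_add_principal[OF \<open>left_ideal M\<close>]] \<open>t * s \<notin> M\<close> by blast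
    have "u \<in> J" for u
    proof -
      obtain m r where "m \<in> M" "u * s = m + r * (t * s)"
        using \<open>?N = UNIV\<close> by blast
      then have "u - r * t \<in> ?K" by (simp add: algebra_simps)
      then have "(u - r * t) + r * t \<in> J"
        using J left_idealD(2,4)[OF \<open>left_ideal J\<close>] \<open>t \<in> J\<close> by blast
      then show ?thesis by simp
    qed
    then show ?thesis by blast
  qed (use that in blast)
  ultimately show ?thesis unfolding maximal_left_ideal_def by blast
qed

lemma jacobson_radical_mult_right:
  fixes x s :: "'a::ring_1"
  assumes "x \<in> jacobson_radical"
  shows "x * s \<in> jacobson_radical"
  unfolding jacobson_radical_iff
proof (intro allI impI)
  fix M :: "'a set" assume M: "maximal_left_ideal M"
  show "x * s \<in> M"
  proof (cases "s \<in> M")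
    case True
    with M show ?thesis unfolding maximal_left_ideal_def using left_idealD(4) by blast
  next
    case False
    with M assms have "x \<in> {t. t * s \<in> M}"
      using maximal_left_ideal_quotient unfolding jacobson_radical_iff by blast
    then show ?thesis by simp
  qed
qed

lemma idempotent_jacobson_radical_eq_0:
  assumes "e * e = e" "e \<in> jacobson_radical"
  shows "e = 0"
proof (rule ccontr)
  assume "e \<noteq> 0"
  let ?L = "{m + r * (1 - e) | m r. m \<in> {0}}"
  have "1 \<notin> ?L"
  proof
    assume "1 \<in> ?L"
    then obtain r where "1 = r * (1 - e)" by auto
    then have "e = r * (1 - e) * e" by (metis mult_1)
    also have "\<dots> = r * (e - e * e)" by (simp add: algebra_simps)
    finally show False using \<open>e * e = e\<close> \<open>e \<noteq> 0\<close> by simp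
  qed
  moreover have "left_ideal ?L"
    by (rule left_ideal_add_principal) (simp add: left_ideal_def)
  ultimately obtain M where M: "maximal_left_ideal M" "?L \<subseteq> M"
    using maximal_left_ideal_exists by blast
  have "1 - e = 0 + 1 * (1 - e)" by simp
  then have "1 - e \<in> ?L" by blast
  with M have "1 - e \<in> M" by blast
  moreover have "e \<in> M" using assms(2) M(1) unfolding jacobson_radical_iff by blast
  ultimately have "(1 - e) + e \<in> M"
    using M(1) left_idealD(2) unfolding maximal_left_ideal_def by blast
  with M(1) show False unfolding maximal_left_ideal_def using left_ideal_eq_UNIV_iff by auto
qed

lemma inner_inverse_power_mult:
  fixes x y :: "'a::ring_1"
  assumes "y * x = x * y" "y * x * y = y"
  shows "y ^ Suc n * x ^ Suc n = y * x"
proof (induction n)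
  case (Suc n)
  have "y ^ Suc (Suc n) * x ^ Suc (Suc n) = y * (y ^ Suc n * x ^ Suc n) * x"
    by (simp only: power_Suc[of y "Suc n"] power_Suc2[of x "Suc n"] mult.assoc)
  also have "\<dots> = (y * x * y) * x" using Suc assms(1) by (metis mult.assoc)
  finally show ?case using assms(2) by simp
qed simp

lemma idempotent_diff_mult:
  fixes p q :: "'a::ring_1"
  assumes "p * p = p" "q * q = q" "p * q = q * p"
  shows "(q - q * p) * (q - q * p) = q - q * p"
proof -
  have "q * p * q = q * p" "q * p * p = q * p"
    using assms by (metis mult.assoc)+
  then show ?thesis
    using assms by (simp add: algebra_simps) (metis mult.assoc)
qed

lemma is_pdrazin_invD:
  assumes "is_pdrazin_inv x y"
  shows "y * x = x * y" "y * x * y = y" "\<exists>k. x ^ k - x ^ (k + 1) * y \<in> jacobson_radical"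
    "x * c = c * x \<Longrightarrow> y * c = c * y"
  using assms unfolding is_pdrazin_inv_def comm2_def comm_def by auto

lemma pdrazin_inv_idempotents_commute:
  assumes "is_pdrazin_inv x y1" "is_pdrazin_inv x y2"
  shows "x * y1 * (x * y2) = x * y2 * (x * y1)"
proof -
  have "y1 * y2 = y2 * y1" "y1 * x = x * y1" "y2 * x = x * y2"
    using is_pdrazin_invD[OF assms(1)] is_pdrazin_invD[OF assms(2)] by metis+
  then show ?thesis by (metis mult.assoc)
qed

text \<open>\<open>x y\<^sub>2 - x y\<^sub>2 x y\<^sub>1\<close> is an idempotent lying in the radical.\<close>

lemma pdrazin_inv_absorb:
  fixes x y1 y2 :: "'a::ring_1"
  assumes h1: "is_pdrazin_inv x y1" and h2: "is_pdrazin_inv x y2"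
  shows "x * y2 = x * y2 * (x * y1)"
proof -
  note A = is_pdrazin_invD[OF h1] and B = is_pdrazin_invD[OF h2]
  obtain k where "x ^ k - x ^ (k + 1) * y1 \<in> jacobson_radical" using A(3) by blast
  then have "y2 ^ Suc k * x * (x ^ k - x ^ (k + 1) * y1) \<in> jacobson_radical"
    using left_idealD(4)[OF left_ideal_jacobson_radical] by blast
  also have "y2 ^ Suc k * x * (x ^ k - x ^ (k + 1) * y1)
      = y2 ^ Suc k * (x * x ^ k) - y2 ^ Suc k * (x * x ^ Suc k) * y1"
    by (simp only: right_diff_distrib mult.assoc Suc_eq_plus1)
  also have "\<dots> = y2 ^ Suc k * x ^ Suc k - y2 ^ Suc k * x ^ Suc k * (x * y1)"
    using power_commutes[of x "Suc k"] by (metis mult.assoc power_Suc)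
  also have "\<dots> = x * y2 - x * y2 * (x * y1)"
    using inner_inverse_power_mult[OF B(1,2)] B(1) by simp
  finally have "x * y2 - x * y2 * (x * y1) \<in> jacobson_radical" .
  moreover have "x * y1 * (x * y1) = x * y1" "x * y2 * (x * y2) = x * y2"
    using A(1,2) B(1,2) by (metis mult.assoc)+
  ultimately have "x * y2 - x * y2 * (x * y1) = 0"
    using idempotent_jacobson_radical_eq_0 idempotent_diff_mult pdrazin_inv_idempotents_commute[OF h1 h2]
    by metis
  then show ?thesis by simp
qed

lemma pdrazin_inv_unique:
  assumes h1: "is_pdrazin_inv x y1" and h2: "is_pdrazin_inv x y2"
  shows "y1 = y2"
proof -
  note A = is_pdrazin_invD[OF h1] and B = is_pdrazin_invD[OF h2]
  have e: "x * y1 = x * y2"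
    using pdrazin_inv_absorb[OF h1 h2] pdrazin_inv_absorb[OF h2 h1] pdrazin_inv_idempotents_commute[OF h1 h2]
    by simp
  have "y1 = y1 * (x * y1)" using A(2) by (simp add: mult.assoc)
  also have "\<dots> = (y2 * x) * y2" using e A(1) B(1) by (metis mult.assoc)
  also have "\<dots> = y2" using B(2) .
  finally show ?thesis .
qed

lemma pdrazin_eqI: "is_pdrazin_inv x y \<Longrightarrow> pdrazin x = y"
  unfolding pdrazin_def using pdrazin_inv_unique by blast

lemma inner_inverse_square:
  fixes x y :: "'a::ring_1"
  assumes "y * x = x * y" "y * x * y = y"
  shows "y ^ 2 * x = y" "x * y ^ 2 = y"
  using assms by (metis mult.assoc power2_eq_square)+

lemma power_Suc_mult_swap: "(b * a) ^ Suc n = b * (a * b) ^ n * (a::'a::monoid_mult)"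
proof (induction n)
  case (Suc n)
  have "(b * a) ^ Suc (Suc n) = b * ((a * b) ^ n * (a * b)) * a"
    using Suc by (simp only: power_Suc2 mult.assoc)
  then show ?case by (simp only: power_Suc2)
qed simp

lemma comm2_mult_swap:
  fixes a b y :: "'a::ring_1"
  assumes y: "y \<in> comm2 (a * b)" and inner: "y * (a * b) * y = y"
  shows "b * y ^ 2 * a \<in> comm2 (b * a)"
  unfolding comm2_def comm_def
proof (intro CollectI ballI)
  fix c assume "c \<in> {c. b * a * c = c * (b * a)}"
  then have c: "b * a * c = c * (b * a)" by simp
  have y_comm: "y * d = d * y" if "a * b * d = d * (a * b)" for d
    using y that unfolding comm2_def comm_def by blast
  have "a * b * (a * c * b) = a * (b * a * c) * b" by (simp add: mult.assoc)
  also have "\<dots> = a * c * b * (a * b)" using c by (simp add: mult.assoc)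
  finally have y3_acb: "y ^ 3 * (a * c * b) = a * c * b * y ^ 3"
    using y_comm power_commuting_commutes by blast
  have "y * (a * b) = a * b * y" by (rule y_comm) simp
  note sq = inner_inverse_square[OF this inner]
  have y3: "y ^ 3 = y * y ^ 2" "y ^ 3 = y ^ 2 * y"
    by (simp_all add: power3_eq_cube power2_eq_square mult.assoc)
  have "y ^ 3 * (a * b) = y * (y ^ 2 * (a * b))" unfolding y3(1) by (simp add: mult.assoc)
  moreover have "a * b * y ^ 3 = (a * b * y ^ 2) * y" unfolding y3(2) by (simp add: mult.assoc)
  ultimately have y2: "y ^ 2 = y ^ 3 * (a * b)" "y ^ 2 = a * b * y ^ 3"
    unfolding sq by (simp_all add: power2_eq_square)
  have "b * y ^ 2 * a * c = b * (y ^ 3 * (a * c * b)) * a"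
    unfolding y2(1) using c by (simp add: mult.assoc)
  also have "\<dots> = b * (a * c * b * y ^ 3) * a" using y3_acb by simp
  also have "\<dots> = (b * a * c) * (b * y ^ 3 * a)" by (simp add: mult.assoc)
  also have "\<dots> = c * (b * (a * b * y ^ 3) * a)" unfolding c by (simp add: mult.assoc)
  also have "\<dots> = c * (b * y ^ 2 * a)" by (simp only: y2(2))
  finally show "b * y ^ 2 * a * c = c * (b * y ^ 2 * a)" .
qed

lemma is_pdrazin_inv_mult_swap:
  fixes a b y :: "'a::ring_1"
  assumes "is_pdrazin_inv (a * b) y"
  shows "is_pdrazin_inv (b * a) (b * y ^ 2 * a)"
  unfolding is_pdrazin_inv_def
proof (intro conjI)
  note A = is_pdrazin_invD[OF assms]
  note sq = inner_inverse_square[OF A(1,2)]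
  have "b * y ^ 2 * a * (b * a) * (b * y ^ 2 * a) = b * (y ^ 2 * (a * b)) * (a * b * y ^ 2) * a"
    by (simp add: mult.assoc)
  then show "b * y ^ 2 * a = b * y ^ 2 * a * (b * a) * (b * y ^ 2 * a)"
    unfolding sq by (simp add: power2_eq_square mult.assoc)
  show "b * y ^ 2 * a \<in> comm2 (b * a)"
    using comm2_mult_swap[of y a b] assms unfolding is_pdrazin_inv_def by simp
  obtain k where "(a * b) ^ k - (a * b) ^ (k + 1) * y \<in> jacobson_radical"
    using A(3) by blast
  then have "b * ((a * b) ^ k - (a * b) ^ (k + 1) * y) * a \<in> jacobson_radical"
    using left_idealD(4)[OF left_ideal_jacobson_radical] jacobson_radical_mult_right by blast
  also have "b * ((a * b) ^ k - (a * b) ^ (k + 1) * y) * a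
      = (b * a) ^ Suc k - (b * a) ^ (Suc k + 1) * (b * y ^ 2 * a)"
  proof -
    have "(b * a) ^ (Suc k + 1) * (b * y ^ 2 * a) = b * ((a * b) ^ Suc k * (a * b * y ^ 2)) * a"
      by (simp only: Suc_eq_plus1[symmetric] power_Suc_mult_swap[of b a] mult.assoc)
    also have "\<dots> = b * ((a * b) ^ (k + 1) * y) * a" unfolding sq by simp
    finally show ?thesis
      by (simp only: power_Suc_mult_swap[of b a] right_diff_distrib left_diff_distrib)
  qed
  finally show "\<exists>k. (b * a) ^ k - (b * a) ^ (k + 1) * (b * y ^ 2 * a) \<in> jacobson_radical" ..
qed

theorem corollary3p3:
  fixes a b :: "'a::ring_1"
  assumes "a * b \<in> pdrazin_set"
  shows "b * a \<in> pdrazin_set \<and> pdrazin (b * a) = b * (pdrazin (a * b))^2 * a"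
proof -
  obtain y where y: "is_pdrazin_inv (a * b) y"
    using assms unfolding pdrazin_set_def by blast
  then have "is_pdrazin_inv (b * a) (b * y ^ 2 * a)"
    by (rule is_pdrazin_inv_mult_swap)
  then show ?thesis
    using pdrazin_eqI[OF y] pdrazin_eqI unfolding pdrazin_set_def by blast
qed

end
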